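(* Suppose $(P,n,a,b)$ is good. Then there exists $f\in\mathcal{B}$ whose initial part (the sum of its terms of degree at most $n$) is $P$, and such that $f$ has a zero of order at least two in $(a,b)$.
   Context: $\mathcal{B}=\{1+\sum_{k=1}^\infty a_k x^k : a_k\in\{-1,0,1\}\}$ and $\mathcal{B}_n$ is the set of polynomials $1+\sum_{k=1}^n a_kx^k$ with $a_k\in\{-1,0,1\}$. A quadruple $(P,n,a,b)$ is called good if $P\in\mathcal{B}_n$, $0.5<a<b<1$, $P(a)>a^{n+1}/(1-a)$, $P(b)>b^{n+1}/(1-b)$, $P(x)>0$ for all $x\in[a,b]$, and there exists $x\in(a,b)$ with $P(x)<x^{n+1}/(1-x)$. *)

theory Defs
  imports "HOL-Analysis.Analysis" "HOL-Computational_Algebra.Polynomial"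
begin

definition pseries :: "(nat \<Rightarrow> real) \<Rightarrow> real \<Rightarrow> real" where
  "pseries c x = (\<Sum>k. c k * x ^ k)"

definition in_B :: "(nat \<Rightarrow> real) \<Rightarrow> bool" where
  "in_B c \<longleftrightarrow> c 0 = 1 \<and> (\<forall>k\<ge>1. c k \<in> {-1, 0, 1})"

definition in_Bn :: "nat \<Rightarrow> real poly \<Rightarrow> bool" where
  "in_Bn n P \<longleftrightarrow> degree P \<le> n \<and> coeff P 0 = 1 \<and> (\<forall>k\<in>{1..n}. coeff P k \<in> {-1, 0, 1})"

definition good :: "real poly \<Rightarrow> nat \<Rightarrow> real \<Rightarrow> real \<Rightarrow> bool" where
  "good P n a b \<longleftrightarrow> in_Bn n P \<and> 0.5 < a \<and> a < b \<and> b < 1 \<and>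
     poly P a > a ^ (n + 1) / (1 - a) \<and>
     poly P b > b ^ (n + 1) / (1 - b) \<and>
     (\<forall>x\<in>{a..b}. poly P x > 0) \<and>
     (\<exists>x\<in>{a<..<b}. poly P x < x ^ (n + 1) / (1 - x))"

end

theory Submission
  imports Defs
begin

text \<open>Extend \<open>P\<close> greedily by digits \<open>\<plusminus>1\<close>: take \<open>+1\<close> as long as some completion of the
  current partial sum can still dip to \<open>\<le> 0\<close> on \<open>[a, b]\<close>, and \<open>-1\<close> otherwise (for \<open>x \<ge> 1/2\<close> the
  digit \<open>-1\<close> is at most the whole admissible tail \<open>x^(N+1)/(1-x)\<close>, so no completion becomes negative).
  Since the tails tend to \<open>0\<close>, the limit \<open>f\<close> is \<open>\<ge> 0\<close> on \<open>[a, b]\<close> with minimum \<open>0\<close>. The hypotheses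
  at the endpoints make \<open>f(a), f(b) > 0\<close>, so the minimum is interior and is a double zero.\<close>

lemma in_B_abs_le_1:
  assumes "in_B c"
  shows "\<bar>c j\<bar> \<le> 1"
proof (cases "j = 0")
  case False
  then have "c j \<in> {-1, 0, 1}"
    using assms unfolding in_B_def by simp
  then show ?thesis
    by auto
qed (use assms in \<open>simp add: in_B_def\<close>)

lemma poly_eq_sum_coeff_lessThan:
  fixes x :: "'a::{comm_semiring_0,semiring_1}"
  assumes "degree p < N"
  shows "poly p x = (\<Sum>j<N. coeff p j * x ^ j)"
  unfolding poly_altdef
  by (intro sum.mono_neutral_left) (use assms in \<open>auto simp: coeff_eq_0\<close>)

lemma summable_pseries_bounded_coeffs:
  assumes c: "\<And>j. \<bar>c j\<bar> \<le> (1::real)" and x: "\<bar>x\<bar> < 1"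
  shows "summable (\<lambda>j. c j * x ^ j)"
proof (rule summable_comparison_test)
  show "\<exists>N. \<forall>j\<ge>N. norm (c j * x ^ j) \<le> \<bar>x\<bar> ^ j"
    using c by (auto simp: abs_mult power_abs intro!: mult_left_le_one_le)
  show "summable (\<lambda>j. \<bar>x\<bar> ^ j)"
    using x by simp
qed

lemma pseries_has_real_derivative:
  assumes c: "\<And>j. \<bar>c j\<bar> \<le> 1" and x: "\<bar>x\<bar> < 1"
  shows "(pseries c has_real_derivative (\<Sum>j. diffs c j * x ^ j)) (at x)"
  unfolding pseries_def [abs_def]
  using termdiffs_strong' [where K = 1 and c = c and z = x] summable_pseries_bounded_coeffs [OF c] x by simp

lemma pseries_minus_partial_sum_bound:
  assumes c: "\<And>j. \<bar>c j\<bar> \<le> 1" and x: "\<bar>x\<bar> < 1"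
  shows "\<bar>pseries c x - (\<Sum>j<N. c j * x ^ j)\<bar> \<le> \<bar>x\<bar> ^ N / (1 - \<bar>x\<bar>)"
proof -
  have "pseries c x - (\<Sum>j<N. c j * x ^ j) = (\<Sum>j. c (j + N) * x ^ (j + N))"
    unfolding pseries_def
    using suminf_split_initial_segment [OF summable_pseries_bounded_coeffs [OF c x], where k = N] by simp
  also have "\<bar>\<dots>\<bar> \<le> (\<Sum>j. \<bar>x\<bar> ^ N * \<bar>x\<bar> ^ j)"
  proof (rule norm_suminf_le [where 'a = real, unfolded real_norm_def])
    show "\<bar>c (j + N) * x ^ (j + N)\<bar> \<le> \<bar>x\<bar> ^ N * \<bar>x\<bar> ^ j" for j
      using c [of "j + N"]
      by (simp add: abs_mult power_abs power_add mult_left_le_one_le mult.commute)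
    show "summable (\<lambda>j. \<bar>x\<bar> ^ N * \<bar>x\<bar> ^ j)"
      using x by (intro summable_mult) simp
  qed
  also have "\<dots> = \<bar>x\<bar> ^ N / (1 - \<bar>x\<bar>)"
    using x by (simp add: suminf_mult suminf_geometric)
  finally show ?thesis .
qed

lemma partial_sum_minus_tail_le_pseries:
  assumes "\<And>j. \<bar>c j\<bar> \<le> 1" and "0 \<le> x" "x < 1"
  shows "(\<Sum>j<N. c j * x ^ j) - x ^ N / (1 - x) \<le> pseries c x"
  using pseries_minus_partial_sum_bound [of c x N] assms by (simp add: abs_le_iff)

lemma pseries_le_partial_sum_plus_tail:
  assumes "\<And>j. \<bar>c j\<bar> \<le> 1" and "0 \<le> x" "x < 1"
  shows "pseries c x \<le> (\<Sum>j<N. c j * x ^ j) + x ^ N / (1 - x)"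
  using pseries_minus_partial_sum_bound [of c x N] assms by (simp add: abs_le_iff)

lemma pseries_pos_if_poly_above_tail:
  assumes c: "\<And>j. \<bar>c j\<bar> \<le> 1" and y: "0 \<le> y" "y < 1"
    and P: "degree P \<le> n" "\<And>k. k \<le> n \<Longrightarrow> c k = coeff P k"
    and above: "y ^ (n + 1) / (1 - y) < poly P y"
  shows "0 < pseries c y"
proof -
  have "poly P y = (\<Sum>j<n + 1. c j * y ^ j)"
    using P poly_eq_sum_coeff_lessThan [of P "n + 1" y] by simp
  then show ?thesis
    using partial_sum_minus_tail_le_pseries [of c y "n + 1", OF c y] above by simp
qed

lemma pseries_nonneg_if_lower_bounds:
  assumes c: "\<And>j. \<bar>c j\<bar> \<le> 1" and x: "0 \<le> x" "x < 1"
    and lower: "\<And>M. N \<le> M \<Longrightarrow> - (x ^ M / (1 - x)) < (\<Sum>j<M. c j * x ^ j)"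
  shows "0 \<le> pseries c x"
proof (rule LIMSEQ_le_const2)
  show "(\<lambda>M. - 2 * (x ^ M / (1 - x))) \<longlonglongrightarrow> 0"
    using x by (intro tendsto_mult_right_zero tendsto_divide_zero LIMSEQ_power_zero) simp
  have "- 2 * (x ^ M / (1 - x)) \<le> pseries c x" if "N \<le> M" for M
    using lower [OF that] partial_sum_minus_tail_le_pseries [of c x M, OF c x] by linarith
  then show "\<exists>N. \<forall>M\<ge>N. - 2 * (x ^ M / (1 - x)) \<le> pseries c x"
    by blast
qed

lemma pseries_minimum_le_zero_if_upper_bounds:
  assumes c: "\<And>j. \<bar>c j\<bar> \<le> 1" and ab: "0 \<le> a" "a \<le> b" "b < 1"
    and upper: "\<And>M. N \<le> M \<Longrightarrow> \<exists>x\<in>{a..b}. (\<Sum>j<M. c j * x ^ j) \<le> x ^ M / (1 - x)"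
    and min: "\<And>x. x \<in> {a..b} \<Longrightarrow> pseries c x0 \<le> pseries c x"
  shows "pseries c x0 \<le> 0"
proof (rule LIMSEQ_le_const)
  show "(\<lambda>M. 2 * (b ^ M / (1 - b))) \<longlonglongrightarrow> 0"
    using ab by (intro tendsto_mult_right_zero tendsto_divide_zero LIMSEQ_power_zero) simp
  have "pseries c x0 \<le> 2 * (b ^ M / (1 - b))" if M: "N \<le> M" for M
  proof -
    obtain x where x: "x \<in> {a..b}" "(\<Sum>j<M. c j * x ^ j) \<le> x ^ M / (1 - x)"
      using upper [OF M] by blast
    have "pseries c x0 \<le> pseries c x"
      using min [OF x(1)] .
    also have "\<dots> \<le> (\<Sum>j<M. c j * x ^ j) + x ^ M / (1 - x)"
      using pseries_le_partial_sum_plus_tail [of c x M] c x(1) ab by auto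
    also have "\<dots> \<le> 2 * (x ^ M / (1 - x))"
      using x(2) by simp
    also have "\<dots> \<le> 2 * (b ^ M / (1 - b))"
      using x(1) ab by (auto intro!: frac_le power_mono)
    finally show ?thesis .
  qed
  then show "\<exists>N. \<forall>M\<ge>N. pseries c x0 \<le> 2 * (b ^ M / (1 - b))"
    by blast
qed

text \<open>Any tail \<open>\<Sum>j\<ge>N. c j * x ^ j\<close> with \<open>\<bar>c j\<bar> \<le> 1\<close> lies in \<open>[-x^N/(1-x), x^N/(1-x)]\<close>.
  The invariant says that the partial sum \<open>f\<close> of degree \<open>< N\<close> can still be completed to dip
  to \<open>\<le> 0\<close> somewhere on \<open>[a, b]\<close>, while no completion can become negative there.\<close>
definition band_invariant :: "real \<Rightarrow> real \<Rightarrow> nat \<Rightarrow> (real \<Rightarrow> real) \<Rightarrow> bool" where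
  "band_invariant a b N f \<longleftrightarrow>
     (\<exists>x\<in>{a..b}. f x \<le> x ^ N / (1 - x)) \<and> (\<forall>x\<in>{a..b}. - (x ^ N / (1 - x)) < f x)"

lemma pseries_double_zero_if_band_invariant:
  assumes c: "\<And>j. \<bar>c j\<bar> \<le> 1" and ab: "0 \<le> a" "a < b" "b < 1"
    and bands: "\<And>M. N \<le> M \<Longrightarrow> band_invariant a b M (\<lambda>x. \<Sum>j<M. c j * x ^ j)"
    and pos: "0 < pseries c a" "0 < pseries c b"
  shows "\<exists>x0\<in>{a<..<b}. pseries c x0 = 0 \<and> (pseries c has_real_derivative 0) (at x0)"
proof -
  have x: "\<bar>x\<bar> < 1" if "x \<in> {a..b}" for x
    using that ab by auto
  have "continuous_on {a..b} (pseries c)"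
    by (meson DERIV_isCont continuous_at_imp_continuous_on pseries_has_real_derivative c x)
  then obtain x0 where x0: "x0 \<in> {a..b}" and min: "\<And>x. x \<in> {a..b} \<Longrightarrow> pseries c x0 \<le> pseries c x"
    using continuous_attains_inf [OF compact_Icc, of a b "pseries c"] ab by auto
  have "pseries c x0 \<le> 0"
    using pseries_minimum_le_zero_if_upper_bounds [of c a b N x0] c bands min ab
    unfolding band_invariant_def by auto
  moreover have "0 \<le> pseries c x0"
    using pseries_nonneg_if_lower_bounds [of c x0 N] c bands x0 ab
    unfolding band_invariant_def by auto
  ultimately have zero: "pseries c x0 = 0"
    by simp
  with pos x0 have interior: "x0 \<in> {a<..<b}"
    by (cases "x0 = a \<or> x0 = b") auto
  let ?D = "\<Sum>j. diffs c j * x0 ^ j"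
  have D: "(pseries c has_real_derivative ?D) (at x0)"
    using pseries_has_real_derivative [OF c x [OF x0]] .
  have "(\<lambda>h. ?D * h) = (\<lambda>h. 0)"
  proof (rule differential_zero_maxmin [OF interior open_greaterThanLessThan])
    show "(pseries c has_derivative (\<lambda>h. ?D * h)) (at x0)"
      using D by (simp add: has_field_derivative_def)
    show "(\<forall>y\<in>{a<..<b}. pseries c y \<le> pseries c x0) \<or> (\<forall>y\<in>{a<..<b}. pseries c x0 \<le> pseries c y)"
      using min by auto
  qed
  then have "?D = 0"
    by (metis mult_1_right)
  with D zero interior show ?thesis
    by auto
qed

definition greedy_digit :: "real \<Rightarrow> real \<Rightarrow> nat \<Rightarrow> (real \<Rightarrow> real) \<Rightarrow> real" where
  "greedy_digit a b N f =
     (if \<exists>x\<in>{a..b}. f x + x ^ N \<le> x ^ Suc N / (1 - x) then 1 else -1)"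

lemma band_invariant_greedy_step:
  assumes a: "1/2 \<le> a" and b: "b < 1" and inv: "band_invariant a b N f"
  shows "band_invariant a b (Suc N) (\<lambda>x. f x + greedy_digit a b N f * x ^ N)"
proof -
  have x: "1/2 \<le> x" "x < 1" if "x \<in> {a..b}" for x
    using that a b by auto
  have tail_Suc: "x ^ Suc N / (1 - x) = x ^ N / (1 - x) - x ^ N" if "x < 1" for x :: real
    using that by (simp add: field_simps)
  from inv obtain x1 where x1: "x1 \<in> {a..b}" "f x1 \<le> x1 ^ N / (1 - x1)"
    and lower: "\<And>x. x \<in> {a..b} \<Longrightarrow> - (x ^ N / (1 - x)) < f x"
    unfolding band_invariant_def by blast
  show ?thesis
  proof (cases "\<exists>x\<in>{a..b}. f x + x ^ N \<le> x ^ Suc N / (1 - x)")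
    case True
    then have "greedy_digit a b N f = 1"
      by (simp add: greedy_digit_def)
    moreover have "- (x ^ Suc N / (1 - x)) < f x + x ^ N" if "x \<in> {a..b}" for x
      using lower [OF that] tail_Suc [OF x(2) [OF that]] by simp
    ultimately show ?thesis
      using True by (simp add: band_invariant_def)
  next
    case False
    then have "greedy_digit a b N f = -1"
      by (simp add: greedy_digit_def)
    moreover have "f x1 - x1 ^ N \<le> x1 ^ Suc N / (1 - x1)"
      using x1 tail_Suc [OF x(2) [OF x1(1)]] by simp
    moreover have "- (x ^ Suc N / (1 - x)) < f x - x ^ N" if "x \<in> {a..b}" for x
    proof -
      have "x ^ N * (1 - x) \<le> x ^ N * x"
        using x [OF that] by (intro mult_left_mono) auto
      then have "x ^ N \<le> x ^ Suc N / (1 - x)"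
        using x [OF that] by (simp add: field_simps)
      moreover have "x ^ Suc N / (1 - x) < f x + x ^ N"
        using False that by (simp add: not_le)
      ultimately show ?thesis
        by linarith
    qed
    ultimately show ?thesis
      using x1(1) unfolding band_invariant_def by auto
  qed
qed

primrec greedy_sum :: "real \<Rightarrow> real \<Rightarrow> (nat \<Rightarrow> real) \<Rightarrow> nat \<Rightarrow> nat \<Rightarrow> real \<Rightarrow> real" where
  "greedy_sum a b c0 N 0 = (\<lambda>x. \<Sum>j<N. c0 j * x ^ j)"
| "greedy_sum a b c0 N (Suc m) = (\<lambda>x. greedy_sum a b c0 N m x +
     greedy_digit a b (N + m) (greedy_sum a b c0 N m) * x ^ (N + m))"

definition greedy_coeffs :: "real \<Rightarrow> real \<Rightarrow> (nat \<Rightarrow> real) \<Rightarrow> nat \<Rightarrow> nat \<Rightarrow> real" where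
  "greedy_coeffs a b c0 N k =
     (if k < N then c0 k else greedy_digit a b k (greedy_sum a b c0 N (k - N)))"

lemma greedy_coeffs_initial:
  "k < N \<Longrightarrow> greedy_coeffs a b c0 N k = c0 k"
  by (simp add: greedy_coeffs_def)

lemma greedy_coeffs_digit:
  "N \<le> k \<Longrightarrow> greedy_coeffs a b c0 N k \<in> {-1, 1}"
  by (simp add: greedy_coeffs_def greedy_digit_def)

lemma greedy_sum_eq:
  "greedy_sum a b c0 N m = (\<lambda>x. \<Sum>j<N + m. greedy_coeffs a b c0 N j * x ^ j)"
  by (induction m) (simp_all add: greedy_coeffs_def)

lemma band_invariant_greedy_coeffs:
  assumes "1/2 \<le> a" "b < 1" "band_invariant a b N (\<lambda>x. \<Sum>j<N. c0 j * x ^ j)" "N \<le> M"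
  shows "band_invariant a b M (\<lambda>x. \<Sum>j<M. greedy_coeffs a b c0 N j * x ^ j)"
proof -
  have "band_invariant a b (N + m) (greedy_sum a b c0 N m)" for m
    by (induction m) (use assms band_invariant_greedy_step in auto)
  from this [of "M - N"] show ?thesis
    using assms(4) by (simp add: greedy_sum_eq)
qed

lemma in_B_greedy_coeffs:
  assumes "in_Bn n P"
  shows "in_B (greedy_coeffs a b (coeff P) (n + 1))"
  unfolding in_B_def
proof (intro conjI allI impI)
  show "greedy_coeffs a b (coeff P) (n + 1) 0 = 1"
    using assms unfolding in_Bn_def by (simp add: greedy_coeffs_initial)
  fix k :: nat
  assume "1 \<le> k"
  show "greedy_coeffs a b (coeff P) (n + 1) k \<in> {-1, 0, 1}"
  proof (cases "k \<le> n")
    case True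
    then show ?thesis
      using assms \<open>1 \<le> k\<close> unfolding in_Bn_def by (simp add: greedy_coeffs_initial)
  next
    case False
    then show ?thesis
      using greedy_coeffs_digit [of "n + 1" k a b "coeff P"] by auto
  qed
qed

lemma band_invariant_if_good:
  assumes "good P n a b"
  shows "band_invariant a b (n + 1) (\<lambda>x. \<Sum>j<n + 1. coeff P j * x ^ j)"
proof -
  have poly_P: "poly P x = (\<Sum>j<n + 1. coeff P j * x ^ j)" for x
    using assms poly_eq_sum_coeff_lessThan [of P "n + 1" x] unfolding good_def in_Bn_def by simp
  have "- (x ^ (n + 1) / (1 - x)) < poly P x" if "x \<in> {a..b}" for x
  proof -
    have "0 < x ^ (n + 1) / (1 - x)"
      using assms that unfolding good_def by auto
    moreover have "0 < poly P x"
      using assms that unfolding good_def by blast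
    ultimately show ?thesis
      by linarith
  qed
  moreover have "\<exists>x\<in>{a..b}. poly P x \<le> x ^ (n + 1) / (1 - x)"
    using assms unfolding good_def by (auto intro: order.strict_implies_order)
  ultimately show ?thesis
    unfolding band_invariant_def poly_P by auto
qed

theorem corollary3p2:
  fixes P :: "real poly" and n :: nat and a b :: real
  assumes "good P n a b"
  shows "\<exists>c. in_B c \<and> (\<forall>k\<le>n. c k = coeff P k) \<and>
           (\<exists>x0\<in>{a<..<b}. pseries c x0 = 0 \<and> (pseries c has_real_derivative 0) (at x0))"
proof -
  from assms have P: "in_Bn n P" and ab: "1/2 < a" "a < b" "b < 1"
    and ends: "\<And>y. y \<in> {a, b} \<Longrightarrow> y ^ (n + 1) / (1 - y) < poly P y"
    unfolding good_def by auto
  define c where "c = greedy_coeffs a b (coeff P) (n + 1)"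
  have low: "\<And>k. k \<le> n \<Longrightarrow> c k = coeff P k"
    by (simp add: c_def greedy_coeffs_initial)
  have "in_B c"
    unfolding c_def using P by (rule in_B_greedy_coeffs)
  then have c: "\<And>j. \<bar>c j\<bar> \<le> 1"
    by (rule in_B_abs_le_1)
  have "band_invariant a b M (\<lambda>x. \<Sum>j<M. c j * x ^ j)" if "n + 1 \<le> M" for M
    unfolding c_def using ab band_invariant_if_good [OF assms] that
    by (intro band_invariant_greedy_coeffs) auto
  moreover have "0 < pseries c y" if "y \<in> {a, b}" for y
    using pseries_pos_if_poly_above_tail [OF c _ _ _ low ends [OF that]] P that ab
    unfolding in_Bn_def by auto
  ultimately show ?thesis
    using pseries_double_zero_if_band_invariant [OF c, of a b "n + 1"] \<open>in_B c\<close> low ab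
    by auto
qed

end
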